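(* Let $D$ be a crossing optimal normalized 2-page book drawing of $K_n$ and $0\le k\le\lfloor n/2\rfloor-2$. Then every $\le k$-edge $ij$ ($i<j$) of $D$ satisfies $i\le k+1$ or $j\ge n-k$; that is, all entries of $M(D)$ representing $\le k$-edges lie in the union of the first $k+1$ rows and the last $k+1$ columns of $M(D)$.
   Context: Normalized 2-page book drawing of $K_n$: vertices $(1,0),\dots,(n,0)$ labelled $1,\dots,n$; edges $i(i+1)$ on the spine; edge $1n$ in the upper half-plane; every other edge $ij$ a semicircle over $[i,j]$ in the upper or lower half-plane. $M(D)$ has entries $(i,j)$, $1\le i<j\le n$ (row $i$, column $j$), representing edge $ij$; its columns are indexed $2,\dots,n$. For distinct vertices $p,q,r$, $r$ is on the left (right) of $\overrightarrow{pq}$ if the triangle with edges $pq,qr,rp$ traced in order $p,q,r$ is counterclockwise (clockwise); an edge is a $k$-edge if exactly $k$ of the other $n-2$ vertices lie on one side of it; each edge has a unique such index in $\{0,\dots,\lfloor n/2\rfloor-1\}$, and a $\le k$-edge is one with index at most $k$. Crossing optimal: exactly $Z(n)=\frac14\lfloor\frac n2\rfloor\lfloor\frac{n-1}2\rfloor\lfloor\frac{n-2}2\rfloor\lfloor\frac{n-3}2\rfloor$ crossings. *)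

theory Defs
  imports Complex_Main
begin

text \<open>A normalized 2-page book drawing of K_n with vertices 1..n on the spine is
determined by the page of every non-spine edge ij (i < j, j \<ge> i+2):
  upper i j = True  iff the semicircle ij lies in the upper half-plane.
Spine edges i(i+1) are drawn on the spine.\<close>

type_synonym book_drawing = "nat \<Rightarrow> nat \<Rightarrow> bool"

definition normalized :: "nat \<Rightarrow> book_drawing \<Rightarrow> bool" where
  "normalized n upper \<longleftrightarrow> upper 1 n"

text \<open>Crossings: two semicircles cross iff they are on the same page and their
endpoints interleave (i < k < j < l); spine edges cross nothing.\<close>

definition crossings :: "nat \<Rightarrow> book_drawing \<Rightarrow> nat" where
  "crossings n upper = card {(i, k, j, l). 1 \<le> i \<and> i < k \<and> k < j \<and> j < l \<and> l \<le> n
                                      \<and> upper i j = upper k l}"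

definition Z :: "nat \<Rightarrow> real" where
  "Z n = (1/4) * real (n div 2) * real ((n - 1) div 2) * real ((n - 2) div 2)
         * real ((n - 3) div 2)"

definition crossing_optimal :: "nat \<Rightarrow> book_drawing \<Rightarrow> bool" where
  "crossing_optimal n upper \<longleftrightarrow> real (crossings n upper) = Z n"

text \<open>With a < b < c the
sorted vertices, the closed curve a \<rightarrow> b \<rightarrow> c \<rightarrow> a is counterclockwise iff the
long edge ac is in the upper half-plane; cyclic rotation preserves and
reversal flips orientation.\<close>

definition ccw :: "book_drawing \<Rightarrow> nat \<Rightarrow> nat \<Rightarrow> nat \<Rightarrow> bool" where
  "ccw upper p q r =
     (let a = min p (min q r); c = max p (max q r) in
      if (p < q \<and> q < r) \<or> (q < r \<and> r < p) \<or> (r < p \<and> p < q)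
      then upper a c else \<not> upper a c)"

definition left_of :: "book_drawing \<Rightarrow> nat \<Rightarrow> nat \<Rightarrow> nat \<Rightarrow> bool" where
  "left_of upper p q r \<longleftrightarrow> ccw upper p q r"

definition right_of :: "book_drawing \<Rightarrow> nat \<Rightarrow> nat \<Rightarrow> nat \<Rightarrow> bool" where
  "right_of upper p q r \<longleftrightarrow> \<not> ccw upper p q r"

definition k_edge :: "nat \<Rightarrow> book_drawing \<Rightarrow> nat \<Rightarrow> nat \<Rightarrow> nat \<Rightarrow> bool" where
  "k_edge n upper k p q \<longleftrightarrow>
     card {r \<in> {1..n} - {p, q}. left_of upper p q r} = k \<or>
     card {r \<in> {1..n} - {p, q}. right_of upper p q r} = k"

definition le_k_edge :: "nat \<Rightarrow> book_drawing \<Rightarrow> nat \<Rightarrow> nat \<Rightarrow> nat \<Rightarrow> bool" where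
  "le_k_edge n upper k p q \<longleftrightarrow> (\<exists>k' \<le> k. k_edge n upper k' p q)"

end

theory Submission
  imports Defs
begin

text \<open>Counting triples \<open>(e, r, s)\<close> with \<open>r\<close> on the left and \<open>s\<close> on the right of an edge \<open>e\<close>,
  every 4-set of vertices contributes \<open>3\<close> minus its number of crossings, so
  \<open>cr(D) = 3 C(n,4) - \<Sum>\<^sub>e \<kappa>(e) (n - 2 - \<kappa>(e))\<close> where \<open>\<kappa>(e)\<close> is the index of \<open>e\<close>.
  Rewriting \<open>\<kappa> (n - 2 - \<kappa>)\<close> through the truncated weights \<open>(t + 1 - \<kappa>)\<^sub>+\<close> expresses \<open>cr(D)\<close> as a
  constant plus a positive combination of \<open>E\<^sub>\<le>\<^sub>\<le>\<^sub>t = \<Sum>\<^sub>e (t + 1 - \<kappa>(e))\<^sub>+\<close>, and inserting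
  the lower bounds \<open>2 E\<^sub>\<le>\<^sub>\<le>\<^sub>t \<ge> (t+1)(t+2)(t+3)\<close> gives exactly \<open>Z(n)\<close>.

  These lower bounds are already attained by the edges in the first \<open>t+1\<close> rows and the last
  \<open>t+1\<close> columns of \<open>M(D)\<close>. This is shown by induction on \<open>t\<close>, deleting the first vertex: in the
  first row the left counts run through \<open>0, \<dots>, n-2\<close> exactly once, and in each of the last
  columns enough edges keep their index when the first vertex is deleted. Hence a \<open>\<le>k\<close>-edge
  outside this region raises \<open>E\<^sub>\<le>\<^sub>\<le>\<^sub>k\<close> above its bound and \<open>cr(D)\<close> above \<open>Z(n)\<close>.\<close>

section \<open>Left counts in induced sub-drawings\<close>

lemma card_filter_le: "finite A \<Longrightarrow> card {r \<in> A. P r} \<le> card A"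
  by (intro card_mono) auto

lemma card_filter_Un_disjoint:
  "finite A \<Longrightarrow> finite B \<Longrightarrow> A \<inter> B = {} \<Longrightarrow>
   card {r \<in> A \<union> B. P r} = card {r \<in> A. P r} + card {r \<in> B. P r}"
  by (subst card_Un_disjoint[symmetric]) (auto intro: arg_cong[where f = card])

lemma card_filter_positive: "finite A \<Longrightarrow> x \<in> A \<Longrightarrow> P x \<Longrightarrow> 1 \<le> card {r \<in> A. P r}"
  by (auto simp: Suc_le_eq card_gt_0_iff)

text \<open>Left count of the edge \<open>i \<rightarrow> j\<close> (\<open>i < j\<close>) in the drawing induced on \<open>a..b\<close>: a vertex
  \<open>r < i\<close> is on its left iff \<open>rj\<close> is upper, \<open>i < r < j\<close> iff \<open>ij\<close> is lower, \<open>r > j\<close> iff \<open>ir\<close> is upper.\<close>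

definition left_count :: "book_drawing \<Rightarrow> nat \<Rightarrow> nat \<Rightarrow> nat \<Rightarrow> nat \<Rightarrow> nat" where
  "left_count u a b i j = card {r \<in> {a..<i}. u r j} + (if u i j then 0 else j - i - 1)
                          + card {r \<in> {j<..b}. u i r}"

definition edge_index :: "book_drawing \<Rightarrow> nat \<Rightarrow> nat \<Rightarrow> nat \<Rightarrow> nat \<Rightarrow> nat" where
  "edge_index u a b i j = min (left_count u a b i j) (b - a - 1 - left_count u a b i j)"

lemma left_count_le:
  assumes "a \<le> i" "i < j" "j \<le> b"
  shows "left_count u a b i j \<le> b - a - 1"
proof -
  have "card {r \<in> {a..<i}. u r j} \<le> i - a" "card {r \<in> {j<..b}. u i r} \<le> b - j"
    using card_filter_le[of "{a..<i}"] card_filter_le[of "{j<..b}"] by auto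
  with assms show ?thesis unfolding left_count_def by auto
qed

lemma left_count_first_row_inj:
  assumes "a < j1" "j1 < j2" "j2 \<le> b"
  shows "left_count u a b a j1 \<noteq> left_count u a b a j2"
proof -
  define X where "X = card {r \<in> {j1<..j2}. u a r}"
  have split: "card {r \<in> {j1<..b}. u a r} = X + card {r \<in> {j2<..b}. u a r}"
    unfolding X_def using assms card_filter_Un_disjoint[of "{j1<..j2}" "{j2<..b}"]
    by (simp add: ivl_disj_un)
  have "X \<le> j2 - j1"
    unfolding X_def using card_filter_le[of "{j1<..j2}"] by simp
  moreover have "u a j2 \<Longrightarrow> 1 \<le> X"
    unfolding X_def using assms by (intro card_filter_positive) auto
  moreover have "X \<le> j2 - j1 - 1" if "\<not> u a j2"
  proof -
    have "{r \<in> {j1<..j2}. u a r} \<subseteq> {j1<..<j2}" using that le_neq_implies_less by fastforce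
    hence "X \<le> card {j1<..<j2}" unfolding X_def by (intro card_mono) auto
    thus ?thesis by simp
  qed
  ultimately show ?thesis
    unfolding left_count_def split using assms by (cases "u a j1"; cases "u a j2") auto
qed

lemma left_count_last_column_inj:
  assumes "a \<le> x1" "x1 < x2" "x2 < y"
  shows "left_count u a y x1 y \<noteq> left_count u a y x2 y"
proof -
  define Y where "Y = card {r \<in> {x1..<x2}. u r y}"
  have split: "card {r \<in> {a..<x2}. u r y} = card {r \<in> {a..<x1}. u r y} + Y"
    unfolding Y_def using assms card_filter_Un_disjoint[of "{a..<x1}" "{x1..<x2}"]
    by (simp add: ivl_disj_un)
  have "Y \<le> x2 - x1"
    unfolding Y_def using card_filter_le[of "{x1..<x2}"] by simp
  moreover have "u x1 y \<Longrightarrow> 1 \<le> Y"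
    unfolding Y_def using assms by (intro card_filter_positive) auto
  moreover have "Y \<le> x2 - x1 - 1" if "\<not> u x1 y"
  proof -
    have "{r \<in> {x1..<x2}. u r y} \<subseteq> {x1<..<x2}" using that le_neq_implies_less by fastforce
    hence "Y \<le> card {x1<..<x2}" unfolding Y_def by (intro card_mono) auto
    thus ?thesis by simp
  qed
  ultimately show ?thesis
    unfolding left_count_def split using assms by (cases "u x1 y"; cases "u x2 y") auto
qed

lemma bij_betw_interval_if_inj:
  fixes f :: "nat \<Rightarrow> nat"
  assumes "inj_on f A" "f ` A \<subseteq> {0..m}" "card A = Suc m" "finite A"
  shows "bij_betw f A {0..m}"
proof -
  have "card (f ` A) = card {0..m}" using card_image[OF assms(1)] assms(3) by simp
  hence "f ` A = {0..m}" using assms(2) by (intro card_subset_eq) auto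
  thus ?thesis using assms(1) by (simp add: bij_betw_def)
qed

lemma left_count_first_row_bij:
  assumes "a < b"
  shows "bij_betw (\<lambda>j. left_count u a b a j) {a<..b} {0..b-a-1}"
proof (rule bij_betw_interval_if_inj)
  show "inj_on (\<lambda>j. left_count u a b a j) {a<..b}"
    by (intro linorder_inj_onI') (use left_count_first_row_inj in auto)
qed (use assms left_count_le in auto)

lemma left_count_last_column_bij:
  assumes "a < y"
  shows "bij_betw (\<lambda>x. left_count u a y x y) {a..<y} {0..y-a-1}"
proof (rule bij_betw_interval_if_inj)
  show "inj_on (\<lambda>x. left_count u a y x y) {a..<y}"
    by (intro linorder_inj_onI') (use left_count_last_column_inj in auto)
qed (use assms left_count_le in auto)

lemma left_count_split_column:
  "left_count u a b x y = left_count u a y x y + card {r \<in> {y<..b}. u x r}"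
  by (simp add: left_count_def)

lemma left_count_remove_first:
  assumes "a < i" "i < j"
  shows "left_count u a b i j = left_count u (Suc a) b i j + (if u a j then 1 else 0)"
proof -
  have "{a..<i} = insert a {Suc a..<i}" using assms by auto
  hence "{r \<in> {a..<i}. u r j}
         = (if u a j then insert a {r \<in> {Suc a..<i}. u r j} else {r \<in> {Suc a..<i}. u r j})"
    by auto
  thus ?thesis by (simp add: left_count_def)
qed

lemma edge_index_remove_first_le:
  assumes "a < i" "i < j" "j \<le> b"
  shows "edge_index u a b i j \<le> edge_index u (Suc a) b i j + 1"
  using left_count_remove_first[OF assms(1,2)] left_count_le[of "Suc a" i j b u] assms
  by (auto simp: edge_index_def)

section \<open>The border region carries many low-index edges\<close>

lemma double_sum_countdown: "2 * (\<Sum>v\<in>{0..k}. (k+1) - v) = (k+1)*(k+2::nat)"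
proof (induction k)
  case (Suc k)
  have "(\<Sum>v\<in>{0..Suc k}. (Suc k + 1) - v) = (\<Sum>v\<in>{0..k}. (Suc k + 1) - v) + 1"
    by simp
  also have "(\<Sum>v\<in>{0..k}. (Suc k + 1) - v) = (\<Sum>v\<in>{0..k}. ((k + 1) - v) + 1)"
    by (intro sum.cong) auto
  also have "\<dots> = (\<Sum>v\<in>{0..k}. (k + 1) - v) + (k+1)"
    unfolding sum.distrib by simp
  finally show ?case using Suc by (simp add: algebra_simps)
qed simp

lemma first_row_index_weight:
  assumes "2*k+4 \<le> b+1-a"
  shows "(k+1)*(k+2) \<le> (\<Sum>j\<in>{a<..b}. (k+1) - edge_index u a b a j)"
proof -
  define M where "M = b - a - 1"
  define g where "g v = (k+1) - min v (M - v)" for v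
  have kM: "2*k + 2 \<le> M" and ab: "a < b" using assms unfolding M_def by simp_all
  have "(\<Sum>j\<in>{a<..b}. (k+1) - edge_index u a b a j) = (\<Sum>j\<in>{a<..b}. g (left_count u a b a j))"
    unfolding g_def edge_index_def M_def by simp
  also have "\<dots> = (\<Sum>v\<in>{0..M}. g v)"
    using sum.reindex_bij_betw[OF left_count_first_row_bij[OF ab, of u], of g] unfolding M_def by simp
  finally have row: "(\<Sum>j\<in>{a<..b}. (k+1) - edge_index u a b a j) = (\<Sum>v\<in>{0..M}. g v)" .
  define B where "B = (\<lambda>v. M - v) ` {0..k}"
  have "(\<Sum>v\<in>{0..k}. (k+1) - v) \<le> (\<Sum>v\<in>{0..k}. g v)"
    unfolding g_def by (intro sum_mono) auto
  moreover have "(\<Sum>v\<in>{0..k}. (k+1) - v) \<le> (\<Sum>v\<in>B. g v)"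
  proof -
    have "(\<Sum>v\<in>B. g v) = (\<Sum>v\<in>{0..k}. g (M - v))"
      unfolding B_def using kM by (intro sum.reindex_cong[of "\<lambda>v. M - v"]) (auto simp: inj_on_def)
    thus ?thesis unfolding g_def using kM by (auto intro: sum_mono)
  qed
  moreover have "(\<Sum>v\<in>{0..k}. g v) + (\<Sum>v\<in>B. g v) \<le> (\<Sum>v\<in>{0..M}. g v)"
  proof -
    have "(\<Sum>v\<in>{0..k}. g v) + (\<Sum>v\<in>B. g v) = (\<Sum>v\<in>{0..k} \<union> B. g v)"
      unfolding B_def using kM by (intro sum.union_disjoint[symmetric]) auto
    also have "\<dots> \<le> (\<Sum>v\<in>{0..M}. g v)"
      unfolding B_def using kM by (intro sum_mono2) auto
    finally show ?thesis .
  qed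
  ultimately show ?thesis using row double_sum_countdown[of k] by linarith
qed

lemma card_filter_bij_betw_preimage:
  assumes "bij_betw f A B" "V \<subseteq> B"
  shows "card {x \<in> A. f x \<in> V} = card V"
proof -
  have "f ` {x \<in> A. f x \<in> V} = V" "inj_on f {x \<in> A. f x \<in> V}"
    using assms unfolding bij_betw_def by (auto intro: inj_on_subset)
  thus ?thesis using card_image by fastforce
qed

definition stable_edges :: "book_drawing \<Rightarrow> nat \<Rightarrow> nat \<Rightarrow> nat \<Rightarrow> (nat \<times> nat) set" where
  "stable_edges u a b k = {(x,y). a < x \<and> x < y \<and> y \<le> b \<and> b - k \<le> y \<and>
      edge_index u a b x y = edge_index u (Suc a) b x y \<and> edge_index u (Suc a) b x y \<le> k}"

text \<open>Within column \<open>y = b - c\<close> of the drawing on \<open>a+1..b\<close>, an edge \<open>xy\<close> is stable as soon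
  as its left count in the drawing on \<open>a+1..y\<close> lies in \<open>stable_values\<close>: if \<open>ay\<close> is upper,
  vertex \<open>a\<close> is on the left and the left count must already be in the upper half;
  otherwise \<open>a\<close> is on the right and the at most \<open>c\<close> vertices beyond \<open>y\<close> must not lift
  the left count above \<open>k\<close>.\<close>

definition stable_values :: "book_drawing \<Rightarrow> nat \<Rightarrow> nat \<Rightarrow> nat \<Rightarrow> nat \<Rightarrow> nat set" where
  "stable_values u a b k c = (if u a (b-c) then {b-a-2-k..b-a-2-c} else {0..k-c})"

lemma stable_edge_if_stable_value:
  assumes "2*k+4 \<le> b+1-a" "c \<le> k" "a < x" "x < b-c"
    and "left_count u (Suc a) (b-c) x (b-c) \<in> stable_values u a b k c"
  shows "(x, b-c) \<in> stable_edges u a b k"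
proof -
  define y where "y = b - c"
  define P where "P = left_count u (Suc a) y x y"
  define L' where "L' = left_count u (Suc a) b x y"
  have "card {r \<in> {y<..b}. u x r} \<le> c"
    unfolding y_def using card_filter_le[of "{b-c<..b}"] assms(1,2) by simp
  hence beyond: "L' \<le> P + c"
    unfolding L'_def P_def left_count_split_column[of u "Suc a" b x y] by simp
  have "P \<le> L'"
    unfolding L'_def P_def left_count_split_column[of u "Suc a" b x y] by simp
  have "L' \<le> b - Suc a - 1"
    unfolding L'_def y_def using assms by (intro left_count_le) auto
  have idx_a: "edge_index u a b x y
      = min (L' + (if u a y then 1 else 0)) (b - a - 1 - (L' + (if u a y then 1 else 0)))"
    unfolding edge_index_def L'_def using assms left_count_remove_first[of a x y u b]
    unfolding y_def by simp
  have idx_Suc_a: "edge_index u (Suc a) b x y = min L' (b - Suc a - 1 - L')"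
    unfolding edge_index_def L'_def ..
  have P: "P \<in> stable_values u a b k c" using assms(5) unfolding P_def y_def .
  have "edge_index u a b x y = edge_index u (Suc a) b x y \<and> edge_index u (Suc a) b x y \<le> k"
  proof (cases "u a y")
    case True
    hence "b-a-2-k \<le> P" using P unfolding stable_values_def y_def by auto
    thus ?thesis
      using True idx_a idx_Suc_a \<open>P \<le> L'\<close> \<open>L' \<le> b - Suc a - 1\<close> assms(1,2) by auto
  next
    case False
    hence "P \<le> k - c" using P unfolding stable_values_def y_def by auto
    thus ?thesis
      using False idx_a idx_Suc_a beyond \<open>L' \<le> b - Suc a - 1\<close> assms(1,2) by auto
  qed
  thus ?thesis using assms unfolding stable_edges_def y_def by auto
qed

lemma card_stable_edges:
  assumes "2*k+4 \<le> b+1-a"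
  shows "(k+1)*(k+2) \<le> 2 * card (stable_edges u a b k)"
proof -
  define G where "G c = (\<lambda>x. (x, b-c)) `
    {x \<in> {Suc a..<b-c}. left_count u (Suc a) (b-c) x (b-c) \<in> stable_values u a b k c}" for c
  have card_G: "card (G c) = k + 1 - c" if "c \<le> k" for c
  proof -
    have "card (G c) = card {x \<in> {Suc a..<b-c}. left_count u (Suc a) (b-c) x (b-c) \<in> stable_values u a b k c}"
      unfolding G_def by (intro card_image) (auto simp: inj_on_def)
    also have "\<dots> = card (stable_values u a b k c)"
      using that assms
      by (intro card_filter_bij_betw_preimage[OF left_count_last_column_bij])
         (auto simp: stable_values_def)
    also have "\<dots> = k + 1 - c" using that assms by (auto simp: stable_values_def)
    finally show ?thesis .
  qed
  have "(\<Union>c\<in>{0..k}. G c) \<subseteq> stable_edges u a b k"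
    unfolding G_def using stable_edge_if_stable_value[OF assms] by auto
  hence "card (\<Union>c\<in>{0..k}. G c) \<le> card (stable_edges u a b k)"
    by (rule card_mono[rotated])
       (rule finite_subset[of _ "{0..b} \<times> {0..b}"], auto simp: stable_edges_def)
  moreover have "card (\<Union>c\<in>{0..k}. G c) = (\<Sum>c\<in>{0..k}. card (G c))"
    by (intro card_UN_disjoint) (auto simp: G_def)
  moreover have "(\<Sum>c\<in>{0..k}. card (G c)) = (\<Sum>c\<in>{0..k}. k + 1 - c)"
    by (intro sum.cong) (auto simp: card_G)
  ultimately show ?thesis using double_sum_countdown[of k] by simp
qed

definition border_region :: "nat \<Rightarrow> nat \<Rightarrow> nat \<Rightarrow> (nat \<times> nat) set" where
  "border_region a b k = {(i,j). a \<le> i \<and> i < j \<and> j \<le> b \<and> (i \<le> a+k \<or> b-k \<le> j)}"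

lemma finite_border_region: "finite (border_region a b k)"
  by (rule finite_subset[of _ "{0..b} \<times> {0..b}"]) (auto simp: border_region_def)

text \<open>Removing vertex \<open>a\<close>: the first row alone is worth \<open>(k+1)(k+2)/2\<close>, every other edge of
  the region loses at most one in weight and the stable edges lose nothing.\<close>

lemma border_region_weight_remove_first:
  assumes "2*k+4 \<le> b+1-a"
  defines "R \<equiv> {(i,j) \<in> border_region a b k. a < i}"
  shows "3*((k+1)*(k+2)) + 2 * (\<Sum>(i,j)\<in>R. k - edge_index u (Suc a) b i j)
         \<le> 2 * (\<Sum>(i,j)\<in>border_region a b k. (k+1) - edge_index u a b i j)"
proof -
  define w where "w i j = (k+1) - edge_index u a b i j" for i j
  define row where "row = (\<lambda>j. (a,j)) ` {a<..b}"
  have fin: "finite R" "finite row"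
    unfolding R_def row_def by (auto intro: finite_subset[OF _ finite_border_region])
  have "border_region a b k = row \<union> R" "row \<inter> R = {}"
    unfolding row_def R_def border_region_def by auto
  hence split: "(\<Sum>(i,j)\<in>border_region a b k. w i j) = (\<Sum>(i,j)\<in>row. w i j) + (\<Sum>(i,j)\<in>R. w i j)"
    using fin by (simp add: sum.union_disjoint)
  have "(\<Sum>(i,j)\<in>row. w i j) = (\<Sum>j\<in>{a<..b}. w a j)"
    unfolding row_def by (subst sum.reindex) (auto simp: inj_on_def)
  hence row_bound: "(k+1)*(k+2) \<le> (\<Sum>(i,j)\<in>row. w i j)"
    unfolding w_def using first_row_index_weight[OF assms(1)] by simp
  have stable: "stable_edges u a b k \<subseteq> R"
    unfolding stable_edges_def R_def border_region_def by auto
  have "(k - edge_index u (Suc a) b i j) + (if (i,j) \<in> stable_edges u a b k then 1 else 0) \<le> w i j"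
    if "(i,j) \<in> R" for i j
    using that edge_index_remove_first_le[of a i j b u]
    unfolding w_def R_def border_region_def stable_edges_def by auto
  hence "(\<Sum>(i,j)\<in>R. (k - edge_index u (Suc a) b i j) + (if (i,j) \<in> stable_edges u a b k then 1 else 0))
         \<le> (\<Sum>(i,j)\<in>R. w i j)"
    by (intro sum_mono) auto
  moreover have "(\<Sum>(i,j)\<in>R. (k - edge_index u (Suc a) b i j) + (if (i,j) \<in> stable_edges u a b k then 1 else 0))
     = (\<Sum>(i,j)\<in>R. k - edge_index u (Suc a) b i j) + card (stable_edges u a b k)"
    using stable fin by (simp add: sum.distrib split_def sum.If_cases Int_absorb1)
  ultimately show ?thesis
    using split row_bound card_stable_edges[OF assms(1), of u] unfolding w_def by simp
qed

theorem border_region_weight: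
  "2*k+4 \<le> b+1-a \<Longrightarrow>
   (k+1)*(k+2)*(k+3) \<le> 2 * (\<Sum>(i,j)\<in>border_region a b k. (k+1) - edge_index u a b i j)"
proof (induction k arbitrary: a)
  case 0
  from border_region_weight_remove_first[OF 0] show ?case by simp
next
  case (Suc k)
  have "(k+1)*(k+2)*(k+3) \<le> 2 * (\<Sum>(i,j)\<in>border_region (Suc a) b k. (k+1) - edge_index u (Suc a) b i j)"
    using Suc.prems by (intro Suc.IH) simp
  also have "\<dots> \<le> 2 * (\<Sum>(i,j)\<in>{(i,j) \<in> border_region a b (Suc k). a < i}. (k+1) - edge_index u (Suc a) b i j)"
    by (intro mult_le_mono2 sum_mono2 finite_subset[OF _ finite_border_region[of a b "Suc k"]])
       (auto simp: border_region_def)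
  finally show ?case
    using border_region_weight_remove_first[OF Suc.prems, of u] by (simp add: algebra_simps)
qed

section \<open>Sides and indices in the whole drawing\<close>

definition left_side :: "book_drawing \<Rightarrow> nat \<Rightarrow> nat \<Rightarrow> nat \<Rightarrow> bool" where
  "left_side u i j r = (if r < i then u r j else if r < j then \<not> u i j else u i r)"

lemma left_of_iff_left_side:
  assumes "i < j" "r \<noteq> i" "r \<noteq> j"
  shows "left_of u i j r \<longleftrightarrow> left_side u i j r"
proof -
  consider "r < i" | "i < r" "r < j" | "j < r" using assms by linarith
  thus ?thesis
    by cases (use assms in \<open>auto simp: left_of_def ccw_def left_side_def Let_def min_def max_def\<close>)
qed

definition lefts :: "book_drawing \<Rightarrow> nat \<Rightarrow> nat \<Rightarrow> nat \<Rightarrow> nat set" where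
  "lefts u n i j = {r \<in> {1..n} - {i,j}. left_of u i j r}"

definition rights :: "book_drawing \<Rightarrow> nat \<Rightarrow> nat \<Rightarrow> nat \<Rightarrow> nat set" where
  "rights u n i j = {r \<in> {1..n} - {i,j}. right_of u i j r}"

lemma card_lefts:
  assumes "1 \<le> i" "i < j" "j \<le> n"
  shows "card (lefts u n i j) = left_count u 1 n i j"
proof -
  define A where "A = {r \<in> {1..<i}. u r j}"
  define B where "B = (if u i j then {} else {i<..<j})"
  define C where "C = {r \<in> {j<..n}. u i r}"
  have "lefts u n i j = {r \<in> {1..n} - {i,j}. left_side u i j r}"
    unfolding lefts_def using assms left_of_iff_left_side[of i j] by auto
  also have "\<dots> = A \<union> B \<union> C"
    unfolding A_def B_def C_def left_side_def using assms by auto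
  finally have "lefts u n i j = A \<union> B \<union> C" .
  moreover have "A \<inter> B = {}" "(A \<union> B) \<inter> C = {}" "finite A" "finite B" "finite C"
    unfolding A_def B_def C_def using assms by auto
  ultimately have "card (lefts u n i j) = card A + card B + card C"
    by (simp add: card_Un_disjoint)
  thus ?thesis unfolding left_count_def A_def B_def C_def by simp
qed

lemma card_rights:
  assumes "1 \<le> i" "i < j" "j \<le> n"
  shows "card (rights u n i j) = n - 2 - left_count u 1 n i j"
proof -
  have "rights u n i j = ({1..n} - {i,j}) - lefts u n i j" "lefts u n i j \<subseteq> {1..n} - {i,j}"
    unfolding rights_def lefts_def right_of_def left_of_def by auto
  moreover have "card ({1..n} - {i,j}) = n - 2" using assms by (simp add: card_Diff_subset)
  ultimately show ?thesis using card_lefts[OF assms, of u]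
    by (simp add: card_Diff_subset finite_subset)
qed

lemma le_k_edge_iff_edge_index_le:
  assumes "1 \<le> i" "i < j" "j \<le> n"
  shows "le_k_edge n u k i j \<longleftrightarrow> edge_index u 1 n i j \<le> k"
  using card_lefts[OF assms, of u] card_rights[OF assms, of u]
  unfolding le_k_edge_def k_edge_def edge_index_def lefts_def rights_def by auto

section \<open>Separations and crossings\<close>

definition edge_set :: "nat \<Rightarrow> (nat \<times> nat) set" where
  "edge_set n = {(i,j). 1 \<le> i \<and> i < j \<and> j \<le> n}"

lemma finite_edge_set: "finite (edge_set n)"
  by (rule finite_subset[of _ "{0..n} \<times> {0..n}"]) (auto simp: edge_set_def)

lemma card_edge_set: "2 * card (edge_set n) = n * (n - 1)"
proof (induction n)
  case 0
  have "edge_set 0 = {}" by (auto simp: edge_set_def)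
  thus ?case by simp
next
  case (Suc n)
  have "edge_set (Suc n) = edge_set n \<union> (\<lambda>i. (i, Suc n)) ` {1..n}"
    unfolding edge_set_def by auto
  hence "card (edge_set (Suc n)) = card (edge_set n) + card ((\<lambda>i. (i, Suc n)) ` {1..n})"
    by (simp only:) (intro card_Un_disjoint finite_edge_set, auto simp: edge_set_def)
  also have "card ((\<lambda>i. (i, Suc n)) ` {1..n}) = n" by (subst card_image) (auto simp: inj_on_def)
  finally show ?case using Suc by (cases n) (auto simp: algebra_simps)
qed

definition separations :: "book_drawing \<Rightarrow> nat \<Rightarrow> ((nat \<times> nat) \<times> (nat \<times> nat)) set" where
  "separations u n = Sigma (edge_set n) (\<lambda>(i,j). lefts u n i j \<times> rights u n i j)"

lemma card_separations:
  "card (separations u n) = (\<Sum>(i,j)\<in>edge_set n. card (lefts u n i j) * card (rights u n i j))"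
  unfolding separations_def
  by (subst card_SigmaI) (auto simp: finite_edge_set lefts_def rights_def card_cartesian_product split_def)

lemma mem_separations:
  "((i,j),(r,s)) \<in> separations u n \<longleftrightarrow>
     1 \<le> i \<and> i < j \<and> j \<le> n \<and> 1 \<le> r \<and> r \<le> n \<and> r \<noteq> i \<and> r \<noteq> j \<and> left_side u i j r
     \<and> 1 \<le> s \<and> s \<le> n \<and> s \<noteq> i \<and> s \<noteq> j \<and> \<not> left_side u i j s"
  unfolding separations_def edge_set_def lefts_def rights_def right_of_def left_of_def[symmetric]
  by (auto simp: left_of_iff_left_side)

definition crossing_quadruples :: "book_drawing \<Rightarrow> nat \<Rightarrow> (nat \<times> nat \<times> nat \<times> nat) set" where
  "crossing_quadruples u n = {(i, k, j, l). 1 \<le> i \<and> i < k \<and> k < j \<and> j < l \<and> l \<le> n \<and> u i j = u k l}"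

lemma crossings_eq_card_crossing_quadruples: "crossings n u = card (crossing_quadruples u n)"
  unfolding crossings_def crossing_quadruples_def ..

lemma card_eq_4_sorted:
  fixes X :: "nat set"
  assumes "card X = 4"
  obtains a b c d where "a < b" "b < c" "c < d" "X = {a,b,c,d}"
proof -
  have "finite X" using assms by (metis card.infinite zero_neq_numeral)
  define xs where "xs = sorted_list_of_set X"
  have "length xs = 4" "sorted_wrt (<) xs" "set xs = X"
    unfolding xs_def using assms \<open>finite X\<close> by simp_all
  then obtain a b c d where "xs = [a,b,c,d]" "sorted_wrt (<) [a,b,c,d]" "set [a,b,c,d] = X"
    by (auto simp: numeral_eq_Suc length_Suc_conv)
  with that show ?thesis by auto
qed

lemma sorted_quadruple_unique:
  fixes a b c d i k j l :: nat
  assumes "a < b" "b < c" "c < d" "i < k" "k < j" "j < l" "{i,k,j,l} = {a,b,c,d}"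
  shows "i = a \<and> k = b \<and> j = c \<and> l = d"
proof -
  have "sorted_list_of_set {a,b,c,d} = [a,b,c,d]" "sorted_list_of_set {i,k,j,l} = [i,k,j,l]"
    using assms(1-6) by (auto intro: sorted_list_of_set_unique[THEN iffD1])
  thus ?thesis using assms(7) by simp
qed

definition separation_candidates :: "nat \<Rightarrow> nat \<Rightarrow> nat \<Rightarrow> nat \<Rightarrow> ((nat \<times> nat) \<times> (nat \<times> nat)) list" where
  "separation_candidates a b c d =
     [((a,b),(c,d)), ((a,b),(d,c)), ((a,c),(b,d)), ((a,c),(d,b)), ((a,d),(b,c)), ((a,d),(c,b)),
      ((b,c),(a,d)), ((b,c),(d,a)), ((b,d),(a,c)), ((b,d),(c,a)), ((c,d),(a,b)), ((c,d),(b,a))]"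

lemma separation_candidates_complete:
  fixes a b c d i j r s :: nat
  assumes "a < b" "b < c" "c < d" "{i,j,r,s} = {a,b,c,d}" "i < j" "distinct [i,j,r,s]"
  shows "((i,j),(r,s)) \<in> set (separation_candidates a b c d)"
proof -
  have "i \<in> {a,b,c,d}" "j \<in> {a,b,c,d}" using assms(4) by blast+
  hence "(i,j) = (a,b) \<or> (i,j) = (a,c) \<or> (i,j) = (a,d) \<or> (i,j) = (b,c) \<or> (i,j) = (b,d) \<or> (i,j) = (c,d)"
    using assms(1-3,5) by (simp only: insert_iff empty_iff) (elim disjE; simp)
  moreover have rest: "{r,s} = {a,b,c,d} - {i,j}" using assms(4,6) by auto
  moreover have pair_cases: "(r = x \<and> s = y) \<or> (r = y \<and> s = x)" if "{r,s} = {x,y}" for x y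
    using that assms(6) by (auto simp: doubleton_eq_iff)
  ultimately show ?thesis
  proof (elim disjE)
    assume ij: "(i,j) = (a,b)"
    hence "{a,b,c,d} - {i,j} = {c,d}" using assms(1-3) by auto
    hence "(r = c \<and> s = d) \<or> (r = d \<and> s = c)" using rest pair_cases by simp
    thus ?thesis using ij unfolding separation_candidates_def by auto
  next
    assume ij: "(i,j) = (a,c)"
    hence "{a,b,c,d} - {i,j} = {b,d}" using assms(1-3) by auto
    hence "(r = b \<and> s = d) \<or> (r = d \<and> s = b)" using rest pair_cases by simp
    thus ?thesis using ij unfolding separation_candidates_def by auto
  next
    assume ij: "(i,j) = (a,d)"
    hence "{a,b,c,d} - {i,j} = {b,c}" using assms(1-3) by auto
    hence "(r = b \<and> s = c) \<or> (r = c \<and> s = b)" using rest pair_cases by simp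
    thus ?thesis using ij unfolding separation_candidates_def by auto
  next
    assume ij: "(i,j) = (b,c)"
    hence "{a,b,c,d} - {i,j} = {a,d}" using assms(1-3) by auto
    hence "(r = a \<and> s = d) \<or> (r = d \<and> s = a)" using rest pair_cases by simp
    thus ?thesis using ij unfolding separation_candidates_def by auto
  next
    assume ij: "(i,j) = (b,d)"
    hence "{a,b,c,d} - {i,j} = {a,c}" using assms(1-3) by auto
    hence "(r = a \<and> s = c) \<or> (r = c \<and> s = a)" using rest pair_cases by simp
    thus ?thesis using ij unfolding separation_candidates_def by auto
  next
    assume ij: "(i,j) = (c,d)"
    hence "{a,b,c,d} - {i,j} = {a,b}" using assms(1-3) by auto
    hence "(r = a \<and> s = b) \<or> (r = b \<and> s = a)" using rest pair_cases by simp
    thus ?thesis using ij unfolding separation_candidates_def by auto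
  qed
qed

definition separation_vertices :: "(nat \<times> nat) \<times> (nat \<times> nat) \<Rightarrow> nat set" where
  "separation_vertices t = (case t of ((i,j),(r,s)) \<Rightarrow> {i,j,r,s})"

definition quadruple_vertices :: "nat \<times> nat \<times> nat \<times> nat \<Rightarrow> nat set" where
  "quadruple_vertices t = (case t of (i,k,j,l) \<Rightarrow> {i,k,j,l})"

lemma card_separations_on:
  assumes "1 \<le> a" "a < b" "b < c" "c < d" "d \<le> n"
  shows "card {t \<in> separations u n. separation_vertices t = {a,b,c,d}}
         + (if u a c = u b d then 1 else 0) = 3"
proof -
  have "{t \<in> separations u n. separation_vertices t = {a,b,c,d}}
        = {t \<in> set (separation_candidates a b c d). t \<in> separations u n}"
  proof (intro equalityI subsetI)
    fix t assume "t \<in> {t \<in> separations u n. separation_vertices t = {a,b,c,d}}"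
    then obtain i j r s where "t = ((i,j),(r,s))" "((i,j),(r,s)) \<in> separations u n"
      "{i,j,r,s} = {a,b,c,d}"
      unfolding separation_vertices_def by (cases t) auto
    moreover from this have "((i,j),(r,s)) \<in> set (separation_candidates a b c d)"
      by (intro separation_candidates_complete[OF assms(2-4)]) (auto simp: mem_separations)
    ultimately show "t \<in> {t \<in> set (separation_candidates a b c d). t \<in> separations u n}"
      by simp
  qed (auto simp: separation_candidates_def separation_vertices_def)
  moreover have "distinct (separation_candidates a b c d)"
    using assms unfolding separation_candidates_def by auto
  ultimately have "card {t \<in> separations u n. separation_vertices t = {a,b,c,d}}
      = length (filter (\<lambda>t. t \<in> separations u n) (separation_candidates a b c d))"
    using distinct_card[OF distinct_filter] by (metis set_filter)
  thus ?thesis using assms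
    by (cases "u a c"; cases "u a d"; cases "u b d")
       (simp_all add: separation_candidates_def mem_separations left_side_def)
qed

lemma card_crossing_quadruples_on:
  assumes "1 \<le> a" "a < b" "b < c" "c < d" "d \<le> n"
  shows "card {t \<in> crossing_quadruples u n. quadruple_vertices t = {a,b,c,d}}
         = (if u a c = u b d then 1 else 0)"
proof -
  have "{t \<in> crossing_quadruples u n. quadruple_vertices t = {a,b,c,d}}
        = (if u a c = u b d then {(a,b,c,d)} else {})"
    using assms sorted_quadruple_unique[OF assms(2-4)]
    by (auto simp: crossing_quadruples_def quadruple_vertices_def)
  thus ?thesis by simp
qed

lemma card_eq_sum_card_fibers:
  assumes "finite A" "finite Q" "\<And>t. t \<in> A \<Longrightarrow> f t \<in> Q"
  shows "card A = (\<Sum>X\<in>Q. card {t \<in> A. f t = X})"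
proof -
  have "A = (\<Union>X\<in>Q. {t \<in> A. f t = X})" using assms(3) by auto
  also have "card \<dots> = (\<Sum>X\<in>Q. card {t \<in> A. f t = X})"
    using assms(1,2) by (intro card_UN_disjoint) auto
  finally show ?thesis .
qed

text \<open>Every 4-set \<open>a < b < c < d\<close> carries three separations unless \<open>ac\<close> and \<open>bd\<close> cross,
  in which case it carries two.\<close>

theorem card_separations_add_crossings:
  "card (separations u n) + crossings n u = 3 * (n choose 4)"
proof -
  define Q where "Q = {X. X \<subseteq> {1..n} \<and> card X = 4}"
  have Q: "finite Q" "card Q = n choose 4"
    unfolding Q_def using n_subsets[of "{1..n}" 4] by (auto intro: finite_subset[of _ "Pow {1..n}"])
  have "finite (separations u n)"
    by (rule finite_subset[of _ "({0..n} \<times> {0..n}) \<times> ({0..n} \<times> {0..n})"])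
       (auto simp: separations_def edge_set_def lefts_def rights_def)
  hence sep: "card (separations u n) = (\<Sum>X\<in>Q. card {t \<in> separations u n. separation_vertices t = X})"
    using Q(1) by (rule card_eq_sum_card_fibers)
       (auto simp: Q_def separation_vertices_def mem_separations card_insert_if)
  have "finite (crossing_quadruples u n)"
    by (rule finite_subset[of _ "{0..n} \<times> {0..n} \<times> {0..n} \<times> {0..n}"])
       (auto simp: crossing_quadruples_def)
  hence cr: "crossings n u = (\<Sum>X\<in>Q. card {t \<in> crossing_quadruples u n. quadruple_vertices t = X})"
    unfolding crossings_eq_card_crossing_quadruples using Q(1) by (rule card_eq_sum_card_fibers)
       (auto simp: Q_def quadruple_vertices_def crossing_quadruples_def card_insert_if)
  have "card {t \<in> separations u n. separation_vertices t = X}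
        + card {t \<in> crossing_quadruples u n. quadruple_vertices t = X} = 3" if "X \<in> Q" for X
  proof -
    obtain a b c d where "a < b" "b < c" "c < d" "X = {a,b,c,d}"
      using card_eq_4_sorted \<open>X \<in> Q\<close> unfolding Q_def by blast
    moreover have "1 \<le> a" "d \<le> n" using that calculation unfolding Q_def by auto
    ultimately show ?thesis using card_separations_on card_crossing_quadruples_on by simp
  qed
  hence "card (separations u n) + crossings n u = (\<Sum>X\<in>Q. 3)"
    unfolding sep cr sum.distrib[symmetric] by (intro sum.cong) auto
  thus ?thesis using Q(2) by simp
qed

section \<open>The crossing number in terms of index weights\<close>

lemma edge_index_le_half: "edge_index u 1 n p q \<le> (n-2) div 2"
  unfolding edge_index_def by (simp add: min_def) linarith

lemma card_lefts_mult_card_rights: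
  assumes "(p,q) \<in> edge_set n"
  shows "card (lefts u n p q) * card (rights u n p q) = edge_index u 1 n p q * (n - 2 - edge_index u 1 n p q)"
proof -
  have pq: "1 \<le> p" "p < q" "q \<le> n" using assms unfolding edge_set_def by auto
  hence "left_count u 1 n p q \<le> n - 2" using left_count_le[of 1 p q n u] by simp
  thus ?thesis unfolding card_lefts[OF pq] card_rights[OF pq] edge_index_def
    by (cases "left_count u 1 n p q \<le> n - 2 - left_count u 1 n p q") (auto simp: min_def mult.commute)
qed

text \<open>\<open>index_weight u n t\<close> is the paper's \<open>E\<^sub>\<le>\<^sub>\<le>\<^sub>t\<close>: the number of \<open>\<le>s\<close>-edges summed over \<open>s \<le> t\<close>.\<close>

definition index_weight :: "book_drawing \<Rightarrow> nat \<Rightarrow> nat \<Rightarrow> nat" where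
  "index_weight u n t = (\<Sum>(p,q)\<in>edge_set n. (t+1) - edge_index u 1 n p q)"

lemma index_weight_lower_bound:
  assumes "2*t+4 \<le> n" "F \<subseteq> edge_set n - border_region 1 n t"
  shows "(t+1)*(t+2)*(t+3) + 2 * (\<Sum>(i,j)\<in>F. (t+1) - edge_index u 1 n i j) \<le> 2 * index_weight u n t"
proof -
  have fin: "finite F" using assms(2) finite_edge_set finite_subset by blast
  have "border_region 1 n t \<subseteq> edge_set n" by (auto simp: border_region_def edge_set_def)
  hence "(\<Sum>(i,j)\<in>border_region 1 n t \<union> F. (t+1) - edge_index u 1 n i j) \<le> index_weight u n t"
    unfolding index_weight_def using assms(2) by (intro sum_mono2 finite_edge_set) auto
  moreover have "(\<Sum>(i,j)\<in>border_region 1 n t \<union> F. (t+1) - edge_index u 1 n i j)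
      = (\<Sum>(i,j)\<in>border_region 1 n t. (t+1) - edge_index u 1 n i j) + (\<Sum>(i,j)\<in>F. (t+1) - edge_index u 1 n i j)"
    using assms(2) fin finite_border_region by (intro sum.union_disjoint) auto
  ultimately show ?thesis using border_region_weight[of t n 1 u] assms(1) by simp
qed

lemma double_sum_truncated: "2 * (\<Sum>t<m. (t+1) - x) = (m - x) * (m + 1 - (x::nat))"
proof (induction m)
  case (Suc m)
  show ?case
  proof (cases "x \<le> m")
    case True
    hence "(Suc m - x) * (Suc m + 1 - x) = (m - x) * (m + 1 - x) + 2 * (m + 1 - x)"
      by (simp add: Suc_diff_le algebra_simps)
    thus ?thesis using Suc by simp
  qed (use Suc in simp)
qed simp

lemma index_product_decomposition:
  fixes x K N :: nat
  assumes "x \<le> K" "2*K \<le> N" "N \<le> 2*K+1" "1 \<le> K"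
  shows "x*(N-x) + 2*(\<Sum>t<K-1. (t+1) - x) + (N+1-2*K)*(K-x) = K*(N-K)"
proof (cases "x = K")
  case True thus ?thesis using double_sum_truncated[where m = "K-1" and x = x] assms by simp
next
  case False
  hence "x < K" using assms(1) by simp
  then obtain y where y: "K = x + Suc y" by (auto simp: less_iff_Suc_add)
  obtain e where e: "N = 2*K + e" using assms(2) le_Suc_ex by blast
  hence "e \<le> 1" using assms(3) by simp
  have sum: "2*(\<Sum>t<K-1. (t+1) - x) = (K - 1 - x) * (K - x)"
    using double_sum_truncated[where m = "K-1" and x = x] assms(4) by simp
  have diffs: "N - x = x + 2*y + 2 + e" "K - 1 - x = y" "K - x = y + 1" "N+1-2*K = e+1" "N - K = x+y+1+e"
    using y e \<open>e \<le> 1\<close> by auto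
  have "x*(x + 2*y + 2 + e) + y*(y+1) + (e+1)*(y+1) = (x + Suc y)*(x+y+1+e)"
    by (simp add: algebra_simps)
  thus ?thesis by (simp only: sum diffs) (simp only: y)
qed

theorem crossings_index_weight_formula:
  assumes "4 \<le> n"
  defines "K \<equiv> (n-2) div 2"
  shows "crossings n u + card (edge_set n) * (K*(n-2-K))
         = 3 * (n choose 4) + 2 * (\<Sum>t<K-1. index_weight u n t) + (n-1-2*K) * index_weight u n (K-1)"
proof -
  define x where "x e = edge_index u 1 n (fst e) (snd e)" for e
  define P where "P = (\<Sum>e\<in>edge_set n. x e * (n-2 - x e))"
  define T where "T = (\<Sum>e\<in>edge_set n. \<Sum>t<K-1. (t+1) - x e)"
  define L where "L = (\<Sum>e\<in>edge_set n. K - x e)"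
  have K: "2*K \<le> n-2" "n-2 \<le> 2*K+1" "1 \<le> K" unfolding K_def using assms(1) by auto
  have "card (separations u n) = P"
    unfolding card_separations P_def x_def
    by (intro sum.cong) (auto simp: card_lefts_mult_card_rights)
  hence "crossings n u + P = 3 * (n choose 4)"
    using card_separations_add_crossings[of u n] by simp
  moreover have "(\<Sum>e\<in>edge_set n. x e * (n-2 - x e) + 2*(\<Sum>t<K-1. (t+1) - x e) + (n-1-2*K) * (K - x e))
                 = card (edge_set n) * (K*(n-2-K))"
    using index_product_decomposition[of _ K "n-2"] edge_index_le_half[of u n] K
    unfolding K_def x_def by simp
  hence "P + 2*T + (n-1-2*K) * L = card (edge_set n) * (K*(n-2-K))"
    unfolding P_def T_def L_def by (simp add: sum.distrib sum_distrib_left)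
  moreover have T: "(\<Sum>t<K-1. index_weight u n t) = T"
    unfolding T_def index_weight_def x_def split_def by (rule sum.swap)
  moreover have L: "index_weight u n (K-1) = L"
    unfolding L_def index_weight_def x_def using K by (simp add: split_def)
  ultimately show ?thesis unfolding T L by linarith
qed

lemma weighted_sum_bound:
  fixes T W :: "nat \<Rightarrow> nat"
  assumes "\<And>t. t \<le> m \<Longrightarrow> T t \<le> 2 * W t" "k \<le> m" "T k + 2 \<le> 2 * W k" "1 \<le> c"
  shows "2 * (\<Sum>t<m. T t) + c * T m + 2 \<le> 2 * (2 * (\<Sum>t<m. W t) + c * W m)"
proof (cases "k < m")
  case True
  have "(\<Sum>t<m. T t) + 2 = (\<Sum>t<m. T t + (if t = k then 2 else 0))"
    using True by (simp add: sum.distrib)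
  also have "\<dots> \<le> (\<Sum>t<m. 2 * W t)"
    by (intro sum_mono) (use assms in auto)
  finally have "(\<Sum>t<m. T t) + 2 \<le> 2 * (\<Sum>t<m. W t)"
    by (simp only: sum_distrib_left)
  moreover have "c * T m \<le> 2 * (c * W m)" using assms(1) mult_le_mono2 by fastforce
  ultimately show ?thesis by arith
next
  case False
  hence "k = m" using assms(2) by simp
  have "(\<Sum>t<m. T t) \<le> (\<Sum>t<m. 2 * W t)" by (intro sum_mono) (use assms in auto)
  hence "(\<Sum>t<m. T t) \<le> 2 * (\<Sum>t<m. W t)" by (simp only: sum_distrib_left)
  moreover have "c * (T m + 2) \<le> 2 * (c * W m)"
    using mult_le_mono2[OF assms(3), of c] \<open>k = m\<close> by simp
  ultimately show ?thesis using assms(4) by (simp add: algebra_simps)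
qed

lemma choose_4_eq: "24 * (n choose 4) = n * (n-1) * (n-2) * (n-3)"
proof (cases "n < 4")
  case True
  thus ?thesis by (auto simp: less_Suc_eq numeral_eq_Suc)
next
  case False
  have r: "real (n-1) = real n - 1" "real (n-2) = real n - 2" "real (n-3) = real n - 3"
    using False by auto
  have "real (24 * (n choose 4)) = 24 * real (n choose 4)" by simp
  also have "\<dots> = real n * (real n - 1) * (real n - 2) * (real n - 3)"
    by (simp add: binomial_gbinomial gbinomial_altdef_of_nat eval_nat_numeral prod.atLeast0_lessThan_Suc)
  also have "\<dots> = real (n * (n-1) * (n-2) * (n-3))" unfolding of_nat_mult r ..
  finally show ?thesis by (simp only: of_nat_eq_iff)
qed

lemma four_times_Z: "4 * Z n = real (n div 2 * ((n-1) div 2) * ((n-2) div 2) * ((n-3) div 2))"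
  by (simp add: Z_def)

lemma sum_rising_product_3: "4 * (\<Sum>t<m. (t+1)*(t+2)*(t+3)) = m*(m+1)*(m+2)*(m+(3::nat))"
  by (induction m) (auto simp: algebra_simps)

text \<open>The bounds \<open>2 E\<^sub>\<le>\<^sub>\<le>\<^sub>t \<ge> (t+1)(t+2)(t+3)\<close>, inserted into the crossing formula, add up to
  exactly \<open>Z(n)\<close>.\<close>

lemma Z_identity:
  assumes "4 \<le> n"
  defines "K \<equiv> (n-2) div 2"
  shows "12 * (n choose 4) + (K-1)*K*(K+1)*(K+2) + 2 * ((n-1-2*K) * (K*(K+1)*(K+2)))
         = n div 2 * ((n-1) div 2) * ((n-2) div 2) * ((n-3) div 2) + 2 * (n*(n-1) * (K*(n-2-K)))"
proof -
  define p where "p = (n - 4) div 2"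
  have "n = 2*p + 4 \<or> n = 2*p + 5" unfolding p_def using assms(1) by presburger
  thus ?thesis
  proof
    assume n: "n = 2*p + 4"
    have "K = p + 1" unfolding K_def n by simp
    moreover have "24 * (n choose 4) = (2*p+4)*(2*p+3)*(2*p+2)*(2*p+1)"
      using choose_4_eq[of n] unfolding n by (simp add: algebra_simps)
    ultimately show ?thesis unfolding n by simp (simp add: algebra_simps)
  next
    assume n: "n = 2*p + 5"
    have "K = p + 1" unfolding K_def n by simp
    moreover have "24 * (n choose 4) = (2*p+5)*(2*p+4)*(2*p+3)*(2*p+2)"
      using choose_4_eq[of n] unfolding n by (simp add: algebra_simps)
    ultimately show ?thesis unfolding n by simp (simp add: algebra_simps)
  qed
qed

theorem Z_plus_one_le_crossings:
  assumes "k + 2 \<le> n div 2" "(i,j) \<in> edge_set n" "(i,j) \<notin> border_region 1 n k"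
    and "edge_index u 1 n i j \<le> k"
  shows "Z n + 1 \<le> real (crossings n u)"
proof -
  define K where "K = (n-2) div 2"
  define c where "c = n - 1 - 2*K"
  define E where "E = card (edge_set n)"
  define M where "M = K * (n-2-K)"
  define W where "W = index_weight u n"
  define T where "T t = (t+1)*(t+2)*(t+3)" for t :: nat
  have n: "4 \<le> n" and K: "1 \<le> K" "k \<le> K - 1" "2*(K-1)+4 \<le> n" and "1 \<le> c"
    using assms(1) unfolding K_def c_def by auto
  have "T (K-1) = K*(K+1)*(K+2)" unfolding T_def using K by (simp add: algebra_simps)
  have linear_combination: "\<And>C EM B SW cW S Q cP Z nM :: nat.
      2*S + cP + 2 \<le> 2*(2*SW + cW) \<Longrightarrow> C + EM = 3*B + 2*SW + cW \<Longrightarrow> 4*S = Q \<Longrightarrow>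
      nM = 2*EM \<Longrightarrow> 12*B + Q + 2*cP = Z + 2*nM \<Longrightarrow> Z + 4 \<le> 4*C"
    by arith
  have "2 * (\<Sum>t<K-1. T t) + c * (K*(K+1)*(K+2)) + 2 \<le> 2 * (2 * (\<Sum>t<K-1. W t) + c * W (K-1))"
  proof (rule weighted_sum_bound[of "K-1" T W k c, unfolded \<open>T (K-1) = K*(K+1)*(K+2)\<close>])
    show "T t \<le> 2 * W t" if "t \<le> K - 1" for t
      using index_weight_lower_bound[of t n "{}" u] that K unfolding T_def W_def by simp
    show "T k + 2 \<le> 2 * W k"
      using index_weight_lower_bound[of k n "{(i,j)}" u] assms K unfolding T_def W_def by simp
  qed (use K \<open>1 \<le> c\<close> in auto)
  moreover have "crossings n u + E * M = 3 * (n choose 4) + 2 * (\<Sum>t<K-1. W t) + c * W (K-1)"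
    using crossings_index_weight_formula[OF n, of u] unfolding K_def c_def E_def M_def W_def .
  moreover have "4 * (\<Sum>t<K-1. T t) = (K-1)*K*(K+1)*(K+2)"
    using sum_rising_product_3[of "K-1"] K unfolding T_def by simp
  moreover have "n*(n-1) * M = 2 * (E * M)"
    using card_edge_set[of n] unfolding E_def by simp
  moreover have "12 * (n choose 4) + (K-1)*K*(K+1)*(K+2) + 2 * (c * (K*(K+1)*(K+2)))
      = n div 2 * ((n-1) div 2) * ((n-2) div 2) * ((n-3) div 2) + 2 * (n*(n-1) * M)"
    using Z_identity[OF n] unfolding K_def[symmetric] c_def[symmetric] M_def[symmetric] .
  ultimately have "n div 2 * ((n-1) div 2) * ((n-2) div 2) * ((n-3) div 2) + 4 \<le> 4 * crossings n u"
    by (rule linear_combination)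
  hence "real (n div 2 * ((n-1) div 2) * ((n-2) div 2) * ((n-3) div 2) + 4) \<le> real (4 * crossings n u)"
    by (simp only: of_nat_le_iff)
  thus ?thesis using four_times_Z[of n] by simp
qed

theorem lemma15:
  fixes n k :: nat and upper :: book_drawing
  assumes "normalized n upper"
    and "crossing_optimal n upper"
    and "k + 2 \<le> n div 2"
    and "1 \<le> i" and "i < j" and "j \<le> n"
    and "le_k_edge n upper k i j"
  shows "i \<le> k + 1 \<or> n - k \<le> j"
proof (rule ccontr)
  assume "\<not> (i \<le> k + 1 \<or> n - k \<le> j)"
  hence "(i,j) \<notin> border_region 1 n k" by (auto simp: border_region_def)
  moreover have "(i,j) \<in> edge_set n" using assms(4-6) by (simp add: edge_set_def)
  moreover have "edge_index upper 1 n i j \<le> k"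
    using assms(7) le_k_edge_iff_edge_index_le[OF assms(4-6)] by simp
  ultimately have "Z n + 1 \<le> real (crossings n upper)"
    using Z_plus_one_le_crossings[OF assms(3)] by blast
  thus False using assms(2) unfolding crossing_optimal_def by simp
qed

end
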